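(* For every $n\ge 4$, $W(n)\le \frac34 n+1$.
   Context: Graphs are finite simple graphs viewed as structures with adjacency relation $E$ and equality; $\chi(G)$ is the chromatic number and $K_3$ the complete graph on 3 vertices. For a graph $G$ with $\chi(G)>3$, $W(G)$ is the least $k$ such that some existential-positive first-order sentence (built from atomic formulas $x=y$, $E(x,y)$ using only $\wedge$, $\vee$ and $\exists$) in which at most $k$ distinct variables occur is true in $G$ and false in $K_3$. $W(n)=\max\{W(G): |V(G)|=n,\ \chi(G)>3\}$. *)

theory Defs
  imports Complex_Main
begin

definition simple_graph :: "'a set \<Rightarrow> ('a \<Rightarrow> 'a \<Rightarrow> bool) \<Rightarrow> bool" where
  "simple_graph V E \<longleftrightarrow> finite V \<and>
     (\<forall>x y. E x y \<longrightarrow> x \<in> V \<and> y \<in> V) \<and>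
     (\<forall>x y. E x y \<longrightarrow> E y x) \<and> (\<forall>x. \<not> E x x)"

definition proper_colouring :: "'a set \<Rightarrow> ('a \<Rightarrow> 'a \<Rightarrow> bool) \<Rightarrow> nat \<Rightarrow> ('a \<Rightarrow> nat) \<Rightarrow> bool" where
  "proper_colouring V E k c \<longleftrightarrow> (\<forall>x\<in>V. c x < k) \<and> (\<forall>x\<in>V. \<forall>y\<in>V. E x y \<longrightarrow> c x \<noteq> c y)"

definition chromatic_number :: "'a set \<Rightarrow> ('a \<Rightarrow> 'a \<Rightarrow> bool) \<Rightarrow> nat" where
  "chromatic_number V E = (LEAST k. \<exists>c. proper_colouring V E k c)"

definition K3_V :: "nat set" where "K3_V = {0, 1, 2}"
definition K3_E :: "nat \<Rightarrow> nat \<Rightarrow> bool" where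
  "K3_E x y \<longleftrightarrow> x \<in> K3_V \<and> y \<in> K3_V \<and> x \<noteq> y"

text \<open>Existential-positive first-order formulas over the signature {E} with equality;
  variables are named by natural numbers.\<close>

datatype epfm = Eq nat nat | Adj nat nat | Conj epfm epfm | Disj epfm epfm | Ex nat epfm

fun vars :: "epfm \<Rightarrow> nat set" where
  "vars (Eq x y) = {x, y}"
| "vars (Adj x y) = {x, y}"
| "vars (Conj p q) = vars p \<union> vars q"
| "vars (Disj p q) = vars p \<union> vars q"
| "vars (Ex x p) = insert x (vars p)"

fun fvars :: "epfm \<Rightarrow> nat set" where
  "fvars (Eq x y) = {x, y}"
| "fvars (Adj x y) = {x, y}"
| "fvars (Conj p q) = fvars p \<union> fvars q"
| "fvars (Disj p q) = fvars p \<union> fvars q"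
| "fvars (Ex x p) = fvars p - {x}"

definition sentence :: "epfm \<Rightarrow> bool" where
  "sentence p \<longleftrightarrow> fvars p = {}"

fun sat :: "'a set \<Rightarrow> ('a \<Rightarrow> 'a \<Rightarrow> bool) \<Rightarrow> (nat \<Rightarrow> 'a) \<Rightarrow> epfm \<Rightarrow> bool" where
  "sat V E s (Eq x y) \<longleftrightarrow> s x = s y"
| "sat V E s (Adj x y) \<longleftrightarrow> E (s x) (s y)"
| "sat V E s (Conj p q) \<longleftrightarrow> sat V E s p \<and> sat V E s q"
| "sat V E s (Disj p q) \<longleftrightarrow> sat V E s p \<or> sat V E s q"
| "sat V E s (Ex x p) \<longleftrightarrow> (\<exists>a\<in>V. sat V E (s(x := a)) p)"

definition holds :: "'a set \<Rightarrow> ('a \<Rightarrow> 'a \<Rightarrow> bool) \<Rightarrow> epfm \<Rightarrow> bool" where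
  "holds V E p \<longleftrightarrow> (\<forall>s. (\<forall>x. s x \<in> V) \<longrightarrow> sat V E s p)"

definition W_graph :: "'a set \<Rightarrow> ('a \<Rightarrow> 'a \<Rightarrow> bool) \<Rightarrow> nat" where
  "W_graph V E = (LEAST k. \<exists>p. sentence p \<and> card (vars p) \<le> k \<and>
       holds V E p \<and> \<not> holds K3_V K3_E p)"

text \<open>W(n): maximum of W(G) over n-vertex graphs with chromatic number > 3
  (every n-vertex graph is isomorphic to one on vertex set {..<n}).\<close>
definition W_num :: "nat \<Rightarrow> nat" where
  "W_num n = Max {W_graph V E | V E. V = {..<n} \<and> simple_graph V E \<and> chromatic_number V E > 3}"

end

theory Submission
  imports Defs
begin

text \<open>Let H be a vertex-minimal non-3-colourable subgraph of G and v \<in> H. A 3-colouring of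
  H - v has a colour class I with 3|I| \<ge> |H| - 1; put A = H - I. Naming variables by the
  vertices of A, the sentence "there are A-vertices carrying the edges of G[A], and for each
  v \<in> I some y adjacent to all A-neighbours of v" uses |A| + 1 variables and holds in G.
  A satisfying assignment in K3 is a homomorphism G[H] \<rightarrow> K3, since I is independent,
  i.e. a 3-colouring of H, which does not exist. Hence W(G) \<le> |A| + 1 \<le> (2n + 4)/3, and this
  is at most 3n/4 + 1 as soon as n \<ge> 4.\<close>

fun conj_list :: "nat \<Rightarrow> epfm list \<Rightarrow> epfm" where
  "conj_list y [] = Eq y y"
| "conj_list y (p # ps) = Conj p (conj_list y ps)"

fun ex_list :: "nat list \<Rightarrow> epfm \<Rightarrow> epfm" where
  "ex_list [] p = p"
| "ex_list (x # xs) p = Ex x (ex_list xs p)"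

lemma sat_conj_list: "sat V E s (conj_list y ps) \<longleftrightarrow> (\<forall>p\<in>set ps. sat V E s p)"
  by (induction ps) auto

lemma vars_conj_list: "vars (conj_list y ps) = insert y (\<Union>(vars ` set ps))"
  by (induction ps) auto

lemma fvars_conj_list: "fvars (conj_list y ps) = insert y (\<Union>(fvars ` set ps))"
  by (induction ps) auto

lemma vars_ex_list: "vars (ex_list xs p) = set xs \<union> vars p"
  by (induction xs) auto

lemma fvars_ex_list: "fvars (ex_list xs p) = fvars p - set xs"
  by (induction xs) auto

lemma sat_ex_listI:
  assumes "\<forall>x\<in>set xs. t x \<in> V" and "sat V E (\<lambda>x. if x \<in> set xs then t x else s x) p"
  shows "sat V E s (ex_list xs p)"
  using assms
proof (induction xs arbitrary: s)
  case Nil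
  then show ?case by simp
next
  case (Cons x xs)
  have "(\<lambda>z. if z \<in> set xs then t z else (s(x := t x)) z)
      = (\<lambda>z. if z \<in> set (x # xs) then t z else s z)"
    by auto
  then have "sat V E (s(x := t x)) (ex_list xs p)"
    using Cons by simp
  then show ?case
    using Cons.prems(1) by auto
qed

lemma sat_ex_listE:
  assumes "sat V E s (ex_list xs p)"
  obtains s' where "\<forall>x\<in>set xs. s' x \<in> V" and "\<forall>x. x \<notin> set xs \<longrightarrow> s' x = s x"
    and "sat V E s' p"
  using assms
proof (induction xs arbitrary: s)
  case Nil
  then show ?case by auto
next
  case (Cons x xs)
  then obtain a where "a \<in> V" and "sat V E (s(x := a)) (ex_list xs p)"
    by auto
  with Cons.IH[of "s(x := a)"] Cons.prems(1) show ?case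
    by (metis fun_upd_other fun_upd_same set_ConsD list.set_intros)
qed

text \<open>Each vertex u \<in> A doubles as the name of a variable, so that in G the assignment u \<mapsto> u
  satisfies the body; the single extra variable y is reused for every v \<in> I.\<close>

definition obstruction_sentence ::
    "(nat \<Rightarrow> nat \<Rightarrow> bool) \<Rightarrow> nat \<Rightarrow> nat set \<Rightarrow> nat set \<Rightarrow> epfm" where
  "obstruction_sentence E y A I =
    (let as = sorted_list_of_set A in
     ex_list (y # as)
       (Conj (conj_list y [Adj u w. u \<leftarrow> as, w \<leftarrow> as, E u w])
             (conj_list y [Ex y (conj_list y [Adj u y. u \<leftarrow> as, E u v]).
                             v \<leftarrow> sorted_list_of_set I])))"

lemma card_vars_obstruction_sentence:
  assumes "finite A"
  shows "card (vars (obstruction_sentence E y A I)) \<le> card A + 1"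
proof -
  have "vars (obstruction_sentence E y A I) \<subseteq> insert y A"
    using assms by (auto simp: obstruction_sentence_def Let_def vars_ex_list vars_conj_list)
  then have "card (vars (obstruction_sentence E y A I)) \<le> card (insert y A)"
    using assms by (intro card_mono) auto
  also have "\<dots> \<le> card A + 1"
    by (simp add: card_insert_le_m1)
  finally show ?thesis .
qed

lemma sentence_obstruction_sentence:
  assumes "finite A"
  shows "sentence (obstruction_sentence E y A I)"
  using assms
  by (auto simp: sentence_def obstruction_sentence_def Let_def fvars_ex_list fvars_conj_list)

lemma holds_obstruction_sentence:
  assumes "finite A" "finite I" "A \<subseteq> V" "I \<subseteq> V" "y \<notin> A"
  shows "holds V E (obstruction_sentence E y A I)"
  unfolding holds_def
proof (intro allI impI)
  fix s :: "nat \<Rightarrow> nat"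
  assume s: "\<forall>x. s x \<in> V"
  let ?t = "\<lambda>x. if x \<in> A then x else s x"
  have "sat V E (?t(y := v)) (conj_list y [Adj u y. u \<leftarrow> sorted_list_of_set A, E u v])" for v
    using assms by (auto simp: sat_conj_list)
  then show "sat V E s (obstruction_sentence E y A I)"
    using assms s unfolding obstruction_sentence_def Let_def
    by (intro sat_ex_listI[where t = ?t]) (auto simp: sat_conj_list)
qed

lemma hom_if_sat_obstruction_sentence:
  assumes "finite A" "finite I" "y \<notin> A"
    and indep: "\<forall>x\<in>I. \<forall>z\<in>I. \<not> E x z"
    and symE: "\<forall>x z. E x z \<longrightarrow> E z x" and symF: "\<forall>a b. F a b \<longrightarrow> F b a"
    and "sat U F s (obstruction_sentence E y A I)"
  obtains h where "\<forall>x\<in>A \<union> I. h x \<in> U" and "\<forall>x\<in>A \<union> I. \<forall>z\<in>A \<union> I. E x z \<longrightarrow> F (h x) (h z)"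
proof -
  let ?as = "sorted_list_of_set A"
  obtain s' where s'U: "\<forall>x\<in>A. s' x \<in> U"
    and body: "sat U F s' (Conj (conj_list y [Adj u w. u \<leftarrow> ?as, w \<leftarrow> ?as, E u w])
      (conj_list y [Ex y (conj_list y [Adj u y. u \<leftarrow> ?as, E u v]). v \<leftarrow> sorted_list_of_set I]))"
    using assms(7) \<open>finite A\<close> unfolding obstruction_sentence_def Let_def
    by (auto elim!: sat_ex_listE)
  have edges: "\<forall>u\<in>A. \<forall>w\<in>A. E u w \<longrightarrow> F (s' u) (s' w)"
    using body \<open>finite A\<close> by (auto simp: sat_conj_list)
  have "\<exists>a\<in>U. \<forall>u\<in>A. E u v \<longrightarrow> F (s' u) a" if "v \<in> I" for v
  proof -
    have "sat U F s' (Ex y (conj_list y [Adj u y. u \<leftarrow> ?as, E u v]))"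
      using body that \<open>finite I\<close> unfolding sat.simps(3) sat_conj_list by simp
    then obtain a where "a \<in> U" and "sat U F (s'(y := a)) (conj_list y [Adj u y. u \<leftarrow> ?as, E u v])"
      by auto
    then show ?thesis
      using \<open>finite A\<close> \<open>y \<notin> A\<close> by (auto simp: sat_conj_list split: if_splits)
  qed
  then obtain f where f: "\<forall>v\<in>I. f v \<in> U \<and> (\<forall>u\<in>A. E u v \<longrightarrow> F (s' u) (f v))"
    by metis
  define h where "h x = (if x \<in> A then s' x else f x)" for x
  have "\<forall>x\<in>A \<union> I. h x \<in> U"
    using s'U f by (auto simp: h_def)
  moreover have "F (h x) (h z)" if "x \<in> A \<union> I" "z \<in> A \<union> I" "E x z" for x z
    using that edges f indep symE symF by (auto simp: h_def)
  ultimately show ?thesis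
    using that by blast
qed

lemma W_graph_le:
  assumes "sentence p" "holds V E p" "\<not> holds K3_V K3_E p"
  shows "W_graph V E \<le> card (vars p)"
  unfolding W_graph_def using assms by (intro Least_le) blast

lemma no_colouring_if_chromatic_number_gt:
  assumes "k < chromatic_number V E"
  shows "\<not> proper_colouring V E k c"
  using assms unfolding chromatic_number_def by (metis Least_le not_le)

lemma proper_colouring_mono:
  "proper_colouring V E k c \<Longrightarrow> k \<le> m \<Longrightarrow> proper_colouring V E m c"
  by (auto simp: proper_colouring_def)

lemma chromatic_number_gt_if_no_colouring:
  assumes "proper_colouring V E m c0" and "\<forall>c. \<not> proper_colouring V E k c"
  shows "k < chromatic_number V E"
proof (rule ccontr)
  assume "\<not> k < chromatic_number V E"
  moreover have "\<exists>c. proper_colouring V E (chromatic_number V E) c"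
    unfolding chromatic_number_def by (rule LeastI_ex) (use assms(1) in blast)
  ultimately show False
    using assms(2) proper_colouring_mono by (meson not_less)
qed

lemma no_colouring_of_clique:
  assumes "K \<subseteq> V" "finite K" "k < card K" "\<forall>x\<in>K. \<forall>y\<in>K. x \<noteq> y \<longrightarrow> E x y"
  shows "\<not> proper_colouring V E k c"
proof
  assume c: "proper_colouring V E k c"
  then have "inj_on c K"
    using assms(1,4) unfolding proper_colouring_def inj_on_def by blast
  moreover have "c ` K \<subseteq> {..<k}"
    using c assms(1) unfolding proper_colouring_def by auto
  ultimately have "card K \<le> card {..<k}"
    by (intro card_inj_on_le) auto
  then show False
    using assms(3) by simp
qed

lemma minimal_non_colourable_subset:
  assumes "finite V" "\<forall>c. \<not> proper_colouring V E k c"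
  obtains H where "H \<subseteq> V" "\<forall>c. \<not> proper_colouring H E k c"
    "\<forall>v\<in>H. \<exists>c. proper_colouring (H - {v}) E k c"
  using assms
proof (induction V rule: finite_psubset_induct)
  case (psubset V)
  show ?case
  proof (cases "\<forall>v\<in>V. \<exists>c. proper_colouring (V - {v}) E k c")
    case True
    then show ?thesis
      using psubset.prems by blast
  next
    case False
    then obtain v where "v \<in> V" "\<forall>c. \<not> proper_colouring (V - {v}) E k c"
      by blast
    then show ?thesis
      using psubset.IH[of "V - {v}"] psubset.prems(1) by blast
  qed
qed

lemma large_colour_class:
  assumes "finite X" "proper_colouring X E k c"
  obtains i where "card X \<le> k * card {x \<in> X. c x = i}"
proof (cases "k = 0")
  case True
  then show ?thesis
    using assms(2) that[of 0] by (auto simp: proper_colouring_def)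
next
  case False
  define C where "C i = {x \<in> X. c x = i}" for i
  obtain m where m: "m \<in> {..<k}" "card (C m) = Max ((\<lambda>i. card (C i)) ` {..<k})"
    using False Max_in[of "(\<lambda>i. card (C i)) ` {..<k}"] by fastforce
  have "X = (\<Union>i<k. C i)"
    using assms(2) by (auto simp: C_def proper_colouring_def)
  then have "card X \<le> (\<Sum>i<k. card (C i))"
    by (metis card_UN_le finite_lessThan)
  also have "\<dots> \<le> (\<Sum>i<k. card (C m))"
    using m(2) by (intro sum_mono) simp
  also have "\<dots> = k * card (C m)"
    by simp
  finally show ?thesis
    using that unfolding C_def by blast
qed

lemma W_graph_le_card_plus_one:
  fixes E :: "nat \<Rightarrow> nat \<Rightarrow> bool"
  assumes finA: "finite A" and finI: "finite I" and "A \<subseteq> V" "I \<subseteq> V"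
    and indep: "\<forall>x\<in>I. \<forall>z\<in>I. \<not> E x z" and sym: "\<forall>x z. E x z \<longrightarrow> E z x"
    and non_col: "\<forall>c. \<not> proper_colouring (A \<union> I) E 3 c"
  shows "W_graph V E \<le> card A + 1"
proof -
  obtain y :: nat where y: "y \<notin> A"
    using finA ex_new_if_finite infinite_UNIV_nat by blast
  let ?p = "obstruction_sentence E y A I"
  have K3_sym: "\<forall>a b. K3_E a b \<longrightarrow> K3_E b a"
    by (auto simp: K3_E_def)
  have not_K3: "\<not> holds K3_V K3_E ?p"
  proof
    assume "holds K3_V K3_E ?p"
    then have "sat K3_V K3_E (\<lambda>_. 0) ?p"
      by (simp add: holds_def K3_V_def)
    then obtain h where "\<forall>x\<in>A \<union> I. h x \<in> K3_V"
      and "\<forall>x\<in>A \<union> I. \<forall>z\<in>A \<union> I. E x z \<longrightarrow> K3_E (h x) (h z)"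
      using hom_if_sat_obstruction_sentence[OF finA finI y indep sym K3_sym] by metis
    then have "proper_colouring (A \<union> I) E 3 h"
      unfolding proper_colouring_def K3_V_def K3_E_def by force
    then show False
      using non_col by blast
  qed
  have "W_graph V E \<le> card (vars ?p)"
    using assms(3,4) by (intro W_graph_le sentence_obstruction_sentence holds_obstruction_sentence
        finA finI y not_K3)
  also have "\<dots> \<le> card A + 1"
    using finA by (rule card_vars_obstruction_sentence)
  finally show ?thesis .
qed

lemma W_graph_bound:
  fixes E :: "nat \<Rightarrow> nat \<Rightarrow> bool"
  assumes finV: "finite V" and non_col: "\<forall>c. \<not> proper_colouring V E 3 c"
    and sym: "\<forall>x z. E x z \<longrightarrow> E z x"
  shows "3 * W_graph V E \<le> 2 * card V + 4"
proof -
  obtain H where HV: "H \<subseteq> V" and non_colH: "\<forall>c. \<not> proper_colouring H E 3 c"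
    and minimal: "\<forall>v\<in>H. \<exists>c. proper_colouring (H - {v}) E 3 c"
    using minimal_non_colourable_subset[OF finV non_col] by blast
  have finH: "finite H"
    using HV finV by (rule finite_subset)
  have "H \<noteq> {}"
    using non_colH by (auto simp: proper_colouring_def)
  then obtain v where v: "v \<in> H"
    by blast
  then obtain c where c: "proper_colouring (H - {v}) E 3 c"
    using minimal by blast
  then obtain i where i: "card (H - {v}) \<le> 3 * card {x \<in> H - {v}. c x = i}"
    using finH large_colour_class[of "H - {v}" E 3 c] by blast
  define I where "I = {x \<in> H - {v}. c x = i}"
  have IH: "I \<subseteq> H" and finI: "finite I"
    using finH by (auto simp: I_def)
  have indep: "\<forall>x\<in>I. \<forall>z\<in>I. \<not> E x z"
    using c by (fastforce simp: I_def proper_colouring_def)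
  have "W_graph V E \<le> card (H - I) + 1"
    using finH finI HV IH indep sym non_colH
    by (intro W_graph_le_card_plus_one) (auto simp: Un_absorb2)
  moreover have "card (H - I) = card H - card I" "card I \<le> card H"
    using IH finH by (auto simp: card_Diff_subset finI card_mono)
  moreover have "card H \<le> card V"
    using finV HV by (rule card_mono)
  moreover have "card (H - {v}) = card H - 1"
    using v by simp
  ultimately show ?thesis
    using i unfolding I_def by linarith
qed

lemma exists_graph_chromatic_number_gt_3:
  assumes "4 \<le> n"
  obtains E :: "nat \<Rightarrow> nat \<Rightarrow> bool"
  where "simple_graph {..<n} E" "3 < chromatic_number {..<n} E"
proof -
  define E where "E x y \<longleftrightarrow> x < 4 \<and> y < 4 \<and> x \<noteq> y" for x y :: nat
  have "simple_graph {..<n} E"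
    using assms by (auto simp: simple_graph_def E_def)
  moreover have "proper_colouring {..<n} E n id"
    by (auto simp: proper_colouring_def E_def)
  moreover have "\<forall>c. \<not> proper_colouring {..<n} E 3 c"
    using assms by (intro allI no_colouring_of_clique[of "{..<4}"]) (auto simp: E_def)
  ultimately show ?thesis
    using that chromatic_number_gt_if_no_colouring by blast
qed

theorem corollary3:
  fixes n :: nat
  assumes "n \<ge> 4"
  shows "real (W_num n) \<le> 3 / 4 * real n + 1"
proof -
  let ?S = "{W_graph V E | V E. V = {..<n} \<and> simple_graph V E \<and> chromatic_number V E > 3}"
  have bound: "3 * w \<le> 2 * n + 4" if "w \<in> ?S" for w
  proof -
    obtain E where "w = W_graph {..<n} E" "simple_graph {..<n} E" "3 < chromatic_number {..<n} E"
      using \<open>w \<in> ?S\<close> by blast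
    then show ?thesis
      using W_graph_bound[of "{..<n}" E] no_colouring_if_chromatic_number_gt[of 3 "{..<n}" E]
      by (simp add: simple_graph_def)
  qed
  have "?S \<subseteq> {..2 * n + 4}"
    using bound by fastforce
  then have "finite ?S"
    using finite_subset by blast
  obtain E where "simple_graph {..<n} E" "3 < chromatic_number {..<n} E"
    using exists_graph_chromatic_number_gt_3[OF assms] .
  then have "?S \<noteq> {}"
    by blast
  with \<open>finite ?S\<close> have "W_num n \<in> ?S"
    unfolding W_num_def by (rule Max_in)
  then have "3 * W_num n \<le> 2 * n + 4"
    by (rule bound)
  then have "3 * real (W_num n) \<le> 2 * real n + 4" and "4 \<le> real n"
    using assms by simp_all
  then show ?thesis
    by linarith
qed

end
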